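(* Let $p>1$, $1/p+1/q=1$, let $\{(x_i,y_i)\}_{i=1}^n\subset\mathbb{R}^d\times\{\pm1\}$ be linearly separable with $\max_i\|x_i\|_q<C$, and let $L(w)=\frac1n\sum_i\ell(y_i\langle w,x_i\rangle)$ with $\ell$ differentiable, decreasing, convex, not attaining its minimum, $\inf\ell=0$. Assume the regularized direction $\bar w^{\mathrm{reg}}_p$ exists. Let $\alpha>0$ and let $r_\alpha$ be such that $L((1+\alpha)\|w\|_p\bar w^{\mathrm{reg}}_p)\le L(w)$ for all $w$ with $\|w\|_p>r_\alpha$. Then for every $w$ with $\|w\|_p>r_\alpha$, $$\langle\nabla L(w),w\rangle\ge(1+\alpha)\|w\|_p\,\langle\nabla L(w),\bar w^{\mathrm{reg}}_p\rangle.$$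
   Context: The regularized direction is $\bar w^{\mathrm{reg}}_p=\lim_{B\to\infty}\bar w_p(B)/B$, where $\bar w_p(B)=\arg\min_{\|w\|_p\le B}L(w)$. *)

theory Defs
  imports "HOL-Analysis.Analysis"
begin

definition pnorm :: "real \<Rightarrow> real ^ 'd \<Rightarrow> real" where
  "pnorm p w = (\<Sum>i\<in>UNIV. \<bar>w $ i\<bar> powr p) powr (1 / p)"

definition emp_loss ::
  "(real \<Rightarrow> real) \<Rightarrow> nat \<Rightarrow> (nat \<Rightarrow> real ^ 'd) \<Rightarrow> (nat \<Rightarrow> real) \<Rightarrow> real ^ 'd \<Rightarrow> real" where
  "emp_loss l n x y w = (1 / real n) * (\<Sum>i<n. l (y i * (w \<bullet> x i)))"

definition reg_dir :: "real \<Rightarrow> (real ^ 'd \<Rightarrow> real) \<Rightarrow> real ^ 'd \<Rightarrow> bool" where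
  "reg_dir p L wbar \<longleftrightarrow>
     (\<exists>wB :: real \<Rightarrow> real ^ 'd.
        (\<forall>B>0. pnorm p (wB B) \<le> B \<and> (\<forall>v. pnorm p v \<le> B \<longrightarrow> L (wB B) \<le> L v)) \<and>
        ((\<lambda>B. (1 / B) *\<^sub>R wB B) \<longlongrightarrow> wbar) at_top)"

end

theory Submission
  imports Defs
begin

(* L is convex, so at a point of differentiability its gradient g satisfies
   <g, v - w> <= L v - L w for every v.  Taking v = (1 + alpha) |w|_p wbar, the choice of r_alpha
   makes the right-hand side nonpositive, which is the claimed inequality. *)

lemma convex_on_compose_affine:
  fixes f :: "'b::real_vector \<Rightarrow> real" and h :: "'a::real_vector \<Rightarrow> 'b"
  assumes f: "convex_on UNIV f" and h: "linear h"
  shows "convex_on UNIV (\<lambda>z. f (c + h z))"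
proof (rule convex_onI)
  fix s :: real and z1 z2 :: 'a
  assume s: "0 < s" "s < 1"
  have "c + h ((1 - s) *\<^sub>R z1 + s *\<^sub>R z2) = (1 - s) *\<^sub>R (c + h z1) + s *\<^sub>R (c + h z2)"
    by (simp add: linear_add[OF h] linear_scale[OF h] scaleR_add_right
        flip: scaleR_add_left)
  then show "f (c + h ((1 - s) *\<^sub>R z1 + s *\<^sub>R z2)) \<le> (1 - s) * f (c + h z1) + s * f (c + h z2)"
    using convex_onD[OF f, of s] s by simp
qed simp

lemma convex_on_sum_fun:
  assumes "convex A" "\<And>i. i \<in> S \<Longrightarrow> convex_on A (f i)"
  shows "convex_on A (\<lambda>x. \<Sum>i\<in>S. f i x)"
  using assms(2)
proof (induction S rule: infinite_finite_induct)
  case (insert j S)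
  then show ?case by (simp add: convex_on_add)
qed (simp_all add: convex_on_const assms(1))

lemma convex_on_emp_loss:
  assumes "convex_on UNIV l"
  shows "convex_on UNIV (emp_loss l n x y)"
proof -
  have "convex_on UNIV (\<lambda>w. l (0 + y i * (w \<bullet> x i)))" for i
    by (rule convex_on_compose_affine[OF assms])
      (simp add: linear_iff inner_add_left algebra_simps)
  then have "convex_on UNIV (\<lambda>w. \<Sum>i<n. l (y i * (w \<bullet> x i)))"
    by (intro convex_on_sum_fun) simp_all
  then show ?thesis
    unfolding emp_loss_def by (rule convex_on_cmul[rotated]) simp
qed

lemma convex_on_has_derivative_above_tangent:
  fixes f :: "'a::real_normed_vector \<Rightarrow> real"
  assumes convex: "convex_on UNIV f" and deriv: "(f has_derivative f') (at w)"
  shows "f w + f' (v - w) \<le> f v"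
proof -
  define \<phi> where "\<phi> = (\<lambda>t::real. f (w + t *\<^sub>R (v - w)))"
  have "convex_on UNIV \<phi>"
    unfolding \<phi>_def by (intro convex_on_compose_affine[OF convex] linear_scaleR_left)
  moreover have "(\<phi> has_field_derivative f' (v - w)) (at 0)"
  proof -
    have line: "((\<lambda>t. w + t *\<^sub>R (v - w)) has_derivative (\<lambda>t. t *\<^sub>R (v - w))) (at 0)"
      by (auto intro!: derivative_eq_intros)
    have "(f has_derivative f') (at (w + 0 *\<^sub>R (v - w)))"
      using deriv by simp
    from diff_chain_at[OF line this]
    have "(\<phi> has_derivative (\<lambda>t. f' (t *\<^sub>R (v - w)))) (at 0)"
      by (simp add: \<phi>_def o_def)
    then show ?thesis
      by (simp add: has_field_derivative_def linear_scale[OF has_derivative_linear[OF deriv]]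
          mult.commute[of _ "f' (v - w)"])
  qed
  ultimately have "f' (v - w) * (1 - 0) \<le> \<phi> 1 - \<phi> 0"
    by (intro convex_on_imp_above_tangent) auto
  then show ?thesis
    by (simp add: \<phi>_def)
qed

theorem corollary1:
  fixes p q C \<alpha> r :: real
    and n :: nat
    and x :: "nat \<Rightarrow> real ^ 'd"
    and y :: "nat \<Rightarrow> real"
    and l :: "real \<Rightarrow> real"
    and wbar :: "real ^ 'd"
  assumes p: "p > 1"
    and q: "1 / p + 1 / q = 1"
    and n: "n \<ge> 1"
    and labels: "\<forall>i<n. y i \<in> {-1, 1}"
    and separable: "\<exists>w. \<forall>i<n. y i * (w \<bullet> x i) > 0"
    and bounded: "\<forall>i<n. pnorm q (x i) < C"
    and l_diff: "\<forall>t. l differentiable (at t)"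
    and l_decr: "\<forall>s t. s < t \<longrightarrow> l t < l s"
    and l_convex: "convex_on UNIV l"
    and l_nomin: "\<forall>t. \<exists>s. l s < l t"
    and l_inf: "(INF t. l t) = 0"
    and regdir: "reg_dir p (emp_loss l n x y) wbar"
    and alpha: "\<alpha> > 0"
    and r_alpha: "\<forall>w. pnorm p w > r \<longrightarrow>
                   emp_loss l n x y (((1 + \<alpha>) * pnorm p w) *\<^sub>R wbar) \<le> emp_loss l n x y w"
  shows "\<forall>w g. pnorm p w > r \<longrightarrow> (emp_loss l n x y has_derivative (\<lambda>h. g \<bullet> h)) (at w) \<longrightarrow>
           g \<bullet> w \<ge> (1 + \<alpha>) * pnorm p w * (g \<bullet> wbar)"
proof (intro allI impI)
  fix w g :: "real ^ 'd"
  assume w: "pnorm p w > r"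
    and deriv: "(emp_loss l n x y has_derivative (\<lambda>h. g \<bullet> h)) (at w)"
  define v where "v = ((1 + \<alpha>) * pnorm p w) *\<^sub>R wbar"
  have "emp_loss l n x y w + g \<bullet> (v - w) \<le> emp_loss l n x y v"
    by (rule convex_on_has_derivative_above_tangent[OF convex_on_emp_loss[OF l_convex] deriv])
  moreover have "emp_loss l n x y v \<le> emp_loss l n x y w"
    using r_alpha w by (simp add: v_def)
  ultimately have "g \<bullet> v \<le> g \<bullet> w"
    by (simp add: inner_diff_right)
  then show "g \<bullet> w \<ge> (1 + \<alpha>) * pnorm p w * (g \<bullet> wbar)"
    by (simp add: v_def)
qed

end
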